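(* Every C*-algebra that is countably degree-2 saturated is countably quantifier-free saturated.
   Context: For $F\subseteq\mathbb R$ and $\varepsilon>0$ let $F_\varepsilon=\{x\in\mathbb R:\operatorname{dist}(x,F)\le\varepsilon\}$. For a class $\Phi$ of *-polynomials (noncommutative polynomials in variables $x_j,x_j^*$, $j\in\mathbb N$, with coefficients in the algebra), a C*-algebra $M$ is countably $\Phi$-saturated if for every sequence $P_n(\bar x)$ ($n\in\mathbb N$) of *-polynomials in $\Phi$ with coefficients in $M$ in variables $x_k$ ($k\in\mathbb N$) and every sequence of compact sets $K_n\subseteq\mathbb R$, the following are equivalent: (i) there are $b_k$ ($k\in\mathbb N$) in the unit ball of $M$ with $\|P_n(\bar b)\|\in K_n$ for all $n$; (ii) for every $m$ there are $b_k$ in the unit ball of $M$ with $\|P_n(\bar b)\|\in (K_n)_{1/m}$ for all $n\le m$. Countably degree-2 saturated means countably $\Phi$-saturated for $\Phi$ the *-polynomials of degree at most 2; countably quantifier-free saturated means countably $\Phi$-saturated for $\Phi$ the class of all *-polynomials. *)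

theory Defs
  imports "HOL-Analysis.Analysis"
begin

text \<open>The real Banach algebra structure comes
from the library classes; complex scalar multiplication and the involution are
added as class parameters.\<close>

class cstar_algebra = real_normed_algebra + banach +
  fixes cscale :: "complex \<Rightarrow> 'a \<Rightarrow> 'a"
    and adj :: "'a \<Rightarrow> 'a"
  assumes cscale_add_right: "cscale c (x + y) = cscale c x + cscale c y"
    and cscale_add_left: "cscale (c + d) x = cscale c x + cscale d x"
    and cscale_cscale: "cscale c (cscale d x) = cscale (c * d) x"
    and cscale_one: "cscale 1 x = x"
    and scaleR_cscale: "scaleR r x = cscale (complex_of_real r) x"
    and norm_cscale: "norm (cscale c x) = cmod c * norm x"
    and mult_cscale_left: "cscale c x * y = cscale c (x * y)"
    and mult_cscale_right: "x * cscale c y = cscale c (x * y)"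
    and adj_adj: "adj (adj x) = x"
    and adj_add: "adj (x + y) = adj x + adj y"
    and adj_cscale: "adj (cscale c x) = cscale (cnj c) (adj x)"
    and adj_mult: "adj (x * y) = adj y * adj x"
    and cstar_identity: "norm (adj x * x) = (norm x)\<^sup>2"

datatype 'a letter = Coef 'a | Var nat | SVar nat

type_synonym 'a spoly = "(complex \<times> 'a letter list) list"

fun letter_eval :: "(nat \<Rightarrow> 'a::cstar_algebra) \<Rightarrow> 'a letter \<Rightarrow> 'a" where
  "letter_eval b (Coef a) = a"
| "letter_eval b (Var j) = b j"
| "letter_eval b (SVar j) = adj (b j)"

text \<open>Product of a word; the empty word evaluates to 0 (no unit is assumed).\<close>
fun word_eval :: "(nat \<Rightarrow> 'a::cstar_algebra) \<Rightarrow> 'a letter list \<Rightarrow> 'a" where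
  "word_eval b [] = 0"
| "word_eval b [l] = letter_eval b l"
| "word_eval b (l # ls) = letter_eval b l * word_eval b ls"

definition spoly_eval :: "(nat \<Rightarrow> 'a::cstar_algebra) \<Rightarrow> 'a spoly \<Rightarrow> 'a" where
  "spoly_eval b P = sum_list (map (\<lambda>(c, w). cscale c (word_eval b w)) P)"

fun is_var :: "'a letter \<Rightarrow> bool" where
  "is_var (Coef a) = False"
| "is_var (Var j) = True"
| "is_var (SVar j) = True"

definition word_degree :: "'a letter list \<Rightarrow> nat" where
  "word_degree w = length (filter is_var w)"

definition spoly_degree :: "'a spoly \<Rightarrow> nat" where
  "spoly_degree P = foldr max (map (\<lambda>(c, w). word_degree w) P) 0"

text \<open>F_eps = {x. dist(x,F) \<le> eps}, with dist(x, {}) = \<infinity> (so the thickening of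
the empty set is empty).\<close>
definition thicken :: "real set \<Rightarrow> real \<Rightarrow> real set" where
  "thicken F \<epsilon> = {x. F \<noteq> {} \<and> infdist x F \<le> \<epsilon>}"

definition countably_saturated :: "'a spoly set \<Rightarrow> 'a::cstar_algebra itself \<Rightarrow> bool" where
  "countably_saturated \<Phi> _ \<longleftrightarrow>
     (\<forall>(P :: nat \<Rightarrow> 'a spoly) (K :: nat \<Rightarrow> real set).
        (\<forall>n. P n \<in> \<Phi>) \<longrightarrow> (\<forall>n. compact (K n)) \<longrightarrow>
        ((\<exists>b :: nat \<Rightarrow> 'a. (\<forall>k. norm (b k) \<le> 1) \<and>
              (\<forall>n. norm (spoly_eval b (P n)) \<in> K n))
         \<longleftrightarrow>
         (\<forall>m::nat. m \<ge> 1 \<longrightarrow> (\<exists>b :: nat \<Rightarrow> 'a. (\<forall>k. norm (b k) \<le> 1) \<and>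
              (\<forall>n \<le> m. norm (spoly_eval b (P n)) \<in> thicken (K n) (1 / real m))))))"

definition countably_degree2_saturated :: "'a::cstar_algebra itself \<Rightarrow> bool" where
  "countably_degree2_saturated T \<longleftrightarrow> countably_saturated {P. spoly_degree P \<le> 2} T"

definition countably_qf_saturated :: "'a::cstar_algebra itself \<Rightarrow> bool" where
  "countably_qf_saturated T \<longleftrightarrow> countably_saturated UNIV T"

end

theory Submission
  imports Defs "HOL-Library.Nat_Bijection"
begin

(* Proof idea: linearisation.  Let P_n be arbitrary *-polynomials in the variables x_k
   and let c w be one of the terms of P_n, with word w = l_0 l_1 ... l_r.  For every
   suffix s_j = l_j ... l_r of w we add a fresh variable y_j meant to hold the
   "normalised" value s_j(x) / wt(s_j), where the weight wt(s) is a product of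
   bounds for the letters, so that y_j again lies in the unit ball.  The identities
   y_j = (wt(s_{j+1}) / wt(s_j)) l_j y_{j+1} (and y_r = l_r / wt(l_r)) have degree at
   most 2, and P_n becomes the linear polynomial T_n = sum c wt(w) y_0.  Old variables
   are placed at even indices, fresh ones at odd indices; the linearised system asks
   |T_n| in K_n and |link equation| in {0}.  Approximate solutions of the P_n thus give approximate solutions of
   the linearised system, degree-2 saturation produces an exact one, and restricting
   it to the even variables solves the original conditions. *)

abbreviation in_unit_ball :: "(nat \<Rightarrow> 'a::cstar_algebra) \<Rightarrow> bool" where
  "in_unit_ball b \<equiv> \<forall>k. norm (b k) \<le> 1"

text \<open>An exact solution is an approximate solution at every precision, so countable
saturation amounts to the implication from (ii) to (i).\<close>

lemma countably_saturatedI: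
  assumes approx_exact: "\<And>(P :: nat \<Rightarrow> 'a::cstar_algebra spoly) K.
     \<forall>n. P n \<in> \<Phi> \<Longrightarrow> \<forall>n. compact (K n) \<Longrightarrow>
     \<forall>m\<ge>1. \<exists>b. in_unit_ball b \<and> (\<forall>n\<le>m. norm (spoly_eval b (P n)) \<in> thicken (K n) (1 / real m)) \<Longrightarrow>
     \<exists>b. in_unit_ball b \<and> (\<forall>n. norm (spoly_eval b (P n)) \<in> K n)"
  shows "countably_saturated \<Phi> TYPE('a)"
  unfolding countably_saturated_def
proof (intro allI impI, rule iffI)
  fix P :: "nat \<Rightarrow> 'a spoly" and K :: "nat \<Rightarrow> real set"
  assume "\<exists>b. in_unit_ball b \<and> (\<forall>n. norm (spoly_eval b (P n)) \<in> K n)"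
  then obtain b where "in_unit_ball b" and exact: "\<forall>n. norm (spoly_eval b (P n)) \<in> K n"
    by blast
  have "norm (spoly_eval b (P n)) \<in> thicken (K n) (1 / real m)" for n m
    using exact[rule_format, of n] by (auto simp: thicken_def)
  with \<open>in_unit_ball b\<close>
  show "\<forall>m\<ge>1. \<exists>b. in_unit_ball b \<and> (\<forall>n\<le>m. norm (spoly_eval b (P n)) \<in> thicken (K n) (1 / real m))"
    by blast
qed (rule approx_exact)

lemma countably_saturatedD:
  assumes "countably_saturated \<Phi> TYPE('a::cstar_algebra)"
    and "\<forall>n. P n \<in> \<Phi>" and "\<forall>n. compact (K n)"
    and "\<forall>m\<ge>1. \<exists>b :: nat \<Rightarrow> 'a. in_unit_ball b \<and>
           (\<forall>n\<le>m. norm (spoly_eval b (P n)) \<in> thicken (K n) (1 / real m))"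
  shows "\<exists>b :: nat \<Rightarrow> 'a. in_unit_ball b \<and> (\<forall>n. norm (spoly_eval b (P n)) \<in> K n)"
  using assms unfolding countably_saturated_def by blast

lemma cscale_zero_right: "cscale c (0::'a::cstar_algebra) = 0"
  using cscale_add_right[of c "0::'a" 0] by simp

lemma cscale_of_real: "cscale (complex_of_real r) (x::'a::cstar_algebra) = r *\<^sub>R x"
  by (simp add: scaleR_cscale)

text \<open>The involution is contractive (in fact isometric), by the C*-identity.\<close>

lemma norm_adj_le: "norm (adj (x::'a::cstar_algebra)) \<le> norm x"
proof -
  let ?y = "adj x"
  have "norm ?y * norm ?y = norm (adj ?y * ?y)" by (simp add: cstar_identity power2_eq_square)
  also have "\<dots> = norm (x * ?y)" by (simp add: adj_adj)
  also have "\<dots> \<le> norm x * norm ?y" by (rule norm_mult_ineq)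
  finally show ?thesis
    by (cases "norm ?y = 0") (auto simp: mult_le_cancel_right)
qed

text \<open>The weight of a word bounds its value on the unit ball; it is at least 1, so
dividing by it is harmless.\<close>

fun letter_weight :: "'a::cstar_algebra letter \<Rightarrow> real" where
  "letter_weight (Coef a) = 1 + norm a"
| "letter_weight (Var j) = 1"
| "letter_weight (SVar j) = 1"

fun word_weight :: "'a::cstar_algebra letter list \<Rightarrow> real" where
  "word_weight [] = 1"
| "word_weight (l # ls) = letter_weight l * word_weight ls"

lemma letter_weight_ge1: "letter_weight l \<ge> 1"
  by (cases l) auto

lemma word_weight_ge1: "word_weight s \<ge> 1"
proof (induction s)
  case (Cons l s)
  have "1 * 1 \<le> letter_weight l * word_weight s"
    using letter_weight_ge1[of l] Cons by (intro mult_mono) auto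
  then show ?case by simp
qed simp

lemma word_weight_pos: "word_weight s > 0"
  using word_weight_ge1[of s] by linarith

lemma norm_letter_eval_le:
  assumes "in_unit_ball b"
  shows "norm (letter_eval b l) \<le> letter_weight l"
  using assms norm_adj_le[of "b _"] by (cases l) (auto intro: order_trans)

lemma word_eval_Cons:
  "s \<noteq> [] \<Longrightarrow> word_eval b (l # s) = letter_eval b l * word_eval b s"
  by (cases s) auto

lemma norm_word_eval_le:
  assumes "in_unit_ball b"
  shows "norm (word_eval b s) \<le> word_weight s"
proof (induction s)
  case (Cons l s)
  show ?case
  proof (cases "s = []")
    case True
    then show ?thesis using norm_letter_eval_le[OF assms, of l] by simp
  next
    case False
    have "norm (word_eval b (l # s)) \<le> norm (letter_eval b l) * norm (word_eval b s)"
      using False by (simp add: word_eval_Cons norm_mult_ineq)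
    also have "\<dots> \<le> letter_weight l * word_weight s"
      using norm_letter_eval_le[OF assms, of l] Cons letter_weight_ge1[of l]
      by (intro mult_mono) auto
    finally show ?thesis by simp
  qed
qed simp

text \<open>The value of a word divided by its weight: the intended value of the fresh
variable attached to a suffix.  It stays in the unit ball.\<close>

definition normalized_word :: "(nat \<Rightarrow> 'a::cstar_algebra) \<Rightarrow> 'a letter list \<Rightarrow> 'a" where
  "normalized_word b s = (1 / word_weight s) *\<^sub>R word_eval b s"

lemma norm_normalized_word_le:
  assumes "in_unit_ball b"
  shows "norm (normalized_word b s) \<le> 1"
  using norm_word_eval_le[OF assms, of s] word_weight_pos[of s]
  by (simp add: normalized_word_def)

text \<open>One step of the linearisation: the normalised value of l s' in terms of l and
the normalised value of s'.  The last argument is ignored for a one-letter word.\<close>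

definition suffix_step :: "'a::cstar_algebra letter \<Rightarrow> 'a letter list \<Rightarrow> 'a \<Rightarrow> 'a \<Rightarrow> 'a" where
  "suffix_step l s' x y = (if s' = [] then (1 / word_weight [l]) *\<^sub>R x
     else (word_weight s' / word_weight (l # s')) *\<^sub>R (x * y))"

lemma normalized_word_Cons:
  "normalized_word b (l # s') = suffix_step l s' (letter_eval b l) (normalized_word b s')"
  using word_weight_pos[of s']
  by (cases "s' = []") (simp_all add: normalized_word_def suffix_step_def word_eval_Cons del: word_weight.simps)

lemma cscale_weight_normalized_word:
  "cscale (c * complex_of_real (word_weight w)) (normalized_word b w) = cscale c (word_eval b w)"
proof -
  have cancel: "complex_of_real (word_weight w) * complex_of_real (1 / word_weight w) = 1"
    using word_weight_pos[of w] by (simp del: word_weight.simps flip: of_real_mult)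
  have "cscale (c * complex_of_real (word_weight w)) (normalized_word b w) =
      cscale (c * (complex_of_real (word_weight w) * complex_of_real (1 / word_weight w))) (word_eval b w)"
    unfolding normalized_word_def scaleR_cscale cscale_cscale mult.assoc ..
  then show ?thesis
    unfolding cancel by simp
qed

definition word_of :: "'a spoly \<Rightarrow> nat \<Rightarrow> 'a letter list" where
  "word_of p i = (if i < length p then snd (p ! i) else [])"

fun lift_letter :: "'a letter \<Rightarrow> 'a letter" where
  "lift_letter (Coef a) = Coef a"
| "lift_letter (Var k) = Var (2 * k)"
| "lift_letter (SVar k) = SVar (2 * k)"

definition aux_var :: "nat \<Rightarrow> nat \<Rightarrow> nat \<Rightarrow> nat" where
  "aux_var n i j = Suc (2 * prod_encode (n, prod_encode (i, j)))"

definition link_poly :: "(nat \<Rightarrow> 'a::cstar_algebra spoly) \<Rightarrow> nat \<Rightarrow> nat \<Rightarrow> nat \<Rightarrow> 'a spoly" where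
  "link_poly P n i j = (case drop j (word_of (P n) i) of
      [] \<Rightarrow> []
    | l # s' \<Rightarrow> (if s' = [] then
         [(1, [Var (aux_var n i j)]), (of_real (- (1 / word_weight [l])), [lift_letter l])]
       else
         [(1, [Var (aux_var n i j)]),
          (of_real (- (word_weight s' / word_weight (l # s'))), [lift_letter l, Var (aux_var n i (Suc j))])]))"

definition top_poly :: "(nat \<Rightarrow> 'a::cstar_algebra spoly) \<Rightarrow> nat \<Rightarrow> 'a spoly" where
  "top_poly P n = map (\<lambda>i. (fst (P n ! i) * of_real (word_weight (word_of (P n) i)),
       if word_of (P n) i = [] then [] else [Var (aux_var n i 0)])) [0..<length (P n)]"

definition linearized :: "(nat \<Rightarrow> 'a::cstar_algebra spoly) \<Rightarrow> nat \<Rightarrow> 'a spoly" where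
  "linearized P k = (if even k then top_poly P (k div 2) else
     (case prod_decode (k div 2) of (n, ij) \<Rightarrow> case prod_decode ij of (i, j) \<Rightarrow> link_poly P n i j))"

definition linearized_bounds :: "(nat \<Rightarrow> real set) \<Rightarrow> nat \<Rightarrow> real set" where
  "linearized_bounds K k = (if even k then K (k div 2) else {0})"

lemma linearized_aux_var: "linearized P (aux_var n i j) = link_poly P n i j"
  by (simp add: linearized_def aux_var_def)

lemma linearized_bounds_aux_var: "linearized_bounds K (aux_var n i j) = {0}"
  by (simp add: linearized_bounds_def aux_var_def)

text \<open>The linearised system consists of polynomials of degree at most 2, since all
its words have length at most 2.\<close>

lemma foldr_max_le: "foldr max xs (0::nat) \<le> k \<longleftrightarrow> (\<forall>x\<in>set xs. x \<le> k)"
  by (induction xs) auto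

lemma degree_linearized: "spoly_degree (linearized P k) \<le> 2"
proof -
  have short_words: "spoly_degree p \<le> 2" if short: "\<forall>(c, w)\<in>set p. length w \<le> 2" for p :: "'a spoly"
  proof -
    have "word_degree w \<le> 2" if "(c, w) \<in> set p" for c w
    proof -
      have "word_degree w \<le> length w"
        unfolding word_degree_def by (rule length_filter_le)
      also have "\<dots> \<le> 2" using short that by blast
      finally show ?thesis .
    qed
    then show ?thesis by (auto simp: spoly_degree_def foldr_max_le)
  qed
  have "spoly_degree (top_poly P n) \<le> 2" for n
    by (rule short_words) (auto simp: top_poly_def)
  moreover have "spoly_degree (link_poly P n i j) \<le> 2" for n i j
    by (rule short_words) (auto simp: link_poly_def split: list.splits)
  ultimately show ?thesis by (auto simp: linearized_def split: prod.splits)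
qed

lemma letter_eval_lift_letter:
  assumes "\<forall>k. b' (2 * k) = b k"
  shows "letter_eval b' (lift_letter l) = letter_eval b l"
  using assms by (cases l) auto

lemma link_poly_eval:
  assumes suffix: "drop j (word_of (P n) i) = l # s'"
  shows "spoly_eval b' (link_poly P n i j) =
     b' (aux_var n i j) - suffix_step l s' (letter_eval b' (lift_letter l)) (b' (aux_var n i (Suc j)))"
  using suffix
  by (cases "s' = []")
     (simp_all add: link_poly_def spoly_eval_def suffix_step_def cscale_one cscale_of_real
        del: of_real_minus of_real_divide word_weight.simps)

lemma drop_Suc_eq_tail: "drop j w = l # s' \<Longrightarrow> drop (Suc j) w = s'"
  by (metis drop_Suc list.sel(3) tl_drop)

lemma top_poly_eval:
  assumes fresh: "\<forall>i. word_of (P n) i \<noteq> [] \<longrightarrow> b' (aux_var n i 0) = normalized_word b (word_of (P n) i)"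
  shows "spoly_eval b' (top_poly P n) = spoly_eval b (P n)"
proof -
  have term_eq: "(\<lambda>(c, w). cscale c (word_eval b' w)) (top_poly P n ! i) =
      (\<lambda>(c, w). cscale c (word_eval b w)) (P n ! i)" if "i < length (P n)" for i
  proof -
    obtain c w where cw: "P n ! i = (c, w)" by fastforce
    then have "word_of (P n) i = w" using that by (simp add: word_of_def)
    then show ?thesis
      using that cw fresh cscale_weight_normalized_word[of c w b]
      by (simp add: top_poly_def cscale_zero_right del: word_weight.simps)
  qed
  have "length (top_poly P n) = length (P n)" by (simp add: top_poly_def)
  then show ?thesis
    using term_eq by (simp add: spoly_eval_def sum_list_sum_nth)
qed

definition extend_assignment :: "(nat \<Rightarrow> 'a::cstar_algebra) \<Rightarrow> (nat \<Rightarrow> 'a spoly) \<Rightarrow> nat \<Rightarrow> 'a" where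
  "extend_assignment b P v = (if even v then b (v div 2) else
     (case prod_decode (v div 2) of (n, ij) \<Rightarrow> case prod_decode ij of (i, j) \<Rightarrow>
        normalized_word b (drop j (word_of (P n) i))))"

lemma extend_assignment_aux_var:
  "extend_assignment b P (aux_var n i j) = normalized_word b (drop j (word_of (P n) i))"
  by (simp add: extend_assignment_def aux_var_def)

lemma extend_assignment_even: "\<forall>k. extend_assignment b P (2 * k) = b k"
  by (simp add: extend_assignment_def)

lemma extend_assignment_in_unit_ball:
  "in_unit_ball b \<Longrightarrow> in_unit_ball (extend_assignment b P)"
  using norm_normalized_word_le by (auto simp: extend_assignment_def split: prod.splits)

lemma link_poly_extend_assignment: "spoly_eval (extend_assignment b P) (link_poly P n i j) = 0"
proof (cases "drop j (word_of (P n) i)")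
  case Nil then show ?thesis by (simp add: link_poly_def spoly_eval_def)
next
  case (Cons l s')
  then show ?thesis
    using drop_Suc_eq_tail[OF Cons]
    by (simp add: link_poly_eval extend_assignment_aux_var normalized_word_Cons
                  letter_eval_lift_letter[OF extend_assignment_even])
qed

lemma top_poly_extend_assignment:
  "spoly_eval (extend_assignment b P) (top_poly P n) = spoly_eval b (P n)"
  by (rule top_poly_eval) (simp add: extend_assignment_aux_var)

text \<open>Conversely, the link equations force the fresh variables to hold the normalised
suffixes of the restriction to the old variables (backward induction along the word).\<close>

lemma link_poly_forces_suffix:
  assumes restrict: "\<forall>k. b' (2 * k) = b k"
    and link: "\<forall>j. spoly_eval b' (link_poly P n i j) = 0"
  shows "drop j (word_of (P n) i) \<noteq> [] \<Longrightarrow> b' (aux_var n i j) = normalized_word b (drop j (word_of (P n) i))"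
proof (induction "length (word_of (P n) i) - j" arbitrary: j rule: less_induct)
  case less
  obtain l s' where suffix: "drop j (word_of (P n) i) = l # s'"
    using less.prems by (cases "drop j (word_of (P n) i)") auto
  have tail: "drop (Suc j) (word_of (P n) i) = s'"
    using suffix by (rule drop_Suc_eq_tail)
  have step: "b' (aux_var n i j) = suffix_step l s' (letter_eval b l) (b' (aux_var n i (Suc j)))"
    using link[rule_format, of j] link_poly_eval[where P = P and n = n, OF suffix, of b']
    by (simp add: letter_eval_lift_letter[OF restrict])
  have "suffix_step l s' (letter_eval b l) (b' (aux_var n i (Suc j))) =
        suffix_step l s' (letter_eval b l) (normalized_word b s')"
  proof (cases "s' = []")
    case False
    have shorter: "length (word_of (P n) i) - Suc j < length (word_of (P n) i) - j"
      using less.prems by simp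
    show ?thesis using less.hyps[OF shorter] tail False by simp
  qed (simp add: suffix_step_def)
  then show ?case using step suffix by (simp add: normalized_word_Cons)
qed

lemma extend_assignment_approx:
  assumes "e \<ge> 0" and approx: "\<forall>n\<le>m. norm (spoly_eval b (P n)) \<in> thicken (K n) e"
  shows "\<forall>k\<le>m. norm (spoly_eval (extend_assignment b P) (linearized P k)) \<in> thicken (linearized_bounds K k) e"
proof (intro allI impI)
  fix k assume "k \<le> m"
  then show "norm (spoly_eval (extend_assignment b P) (linearized P k)) \<in> thicken (linearized_bounds K k) e"
    using approx \<open>e \<ge> 0\<close>
    by (cases "even k")
       (auto simp: linearized_def linearized_bounds_def top_poly_extend_assignment
          link_poly_extend_assignment thicken_def split: prod.splits)
qed

lemma linearized_approx_solutions:
  assumes approx: "\<forall>m\<ge>1. \<exists>b. in_unit_ball b \<and>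
      (\<forall>n\<le>m. norm (spoly_eval b (P n)) \<in> thicken (K n) (1 / real m))"
  shows "\<forall>m\<ge>1. \<exists>b'. in_unit_ball b' \<and>
      (\<forall>k\<le>m. norm (spoly_eval b' (linearized P k)) \<in> thicken (linearized_bounds K k) (1 / real m))"
proof (intro allI impI)
  fix m :: nat assume "m \<ge> 1"
  then obtain b where "in_unit_ball b"
    and "\<forall>n\<le>m. norm (spoly_eval b (P n)) \<in> thicken (K n) (1 / real m)"
    using approx by blast
  then show "\<exists>b'. in_unit_ball b' \<and>
      (\<forall>k\<le>m. norm (spoly_eval b' (linearized P k)) \<in> thicken (linearized_bounds K k) (1 / real m))"
    using extend_assignment_in_unit_ball extend_assignment_approx[of "1 / real m" m b P K]
    by (intro exI[where x = "extend_assignment b P"]) simp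
qed

lemma linearized_exact_solution:
  assumes "\<exists>b'. in_unit_ball b' \<and> (\<forall>k. norm (spoly_eval b' (linearized P k)) \<in> linearized_bounds K k)"
  shows "\<exists>b. in_unit_ball b \<and> (\<forall>n. norm (spoly_eval b (P n)) \<in> K n)"
proof -
  obtain b' where unit: "in_unit_ball b'"
    and exact: "\<forall>k. norm (spoly_eval b' (linearized P k)) \<in> linearized_bounds K k"
    using assms by (elim exE conjE)
  define b where "b k = b' (2 * k)" for k
  have restrict: "\<forall>k. b' (2 * k) = b k" by (simp add: b_def)
  have link: "\<forall>j. spoly_eval b' (link_poly P n i j) = 0" for n i
  proof
    fix j
    show "spoly_eval b' (link_poly P n i j) = 0"
      using exact[rule_format, of "aux_var n i j"]
      by (simp add: linearized_aux_var linearized_bounds_aux_var)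
  qed
  have "spoly_eval b' (top_poly P n) = spoly_eval b (P n)" for n
    using link_poly_forces_suffix[OF restrict link] by (intro top_poly_eval) simp
  then have "norm (spoly_eval b (P n)) \<in> K n" for n
    using exact[rule_format, of "2 * n"] by (simp add: linearized_def linearized_bounds_def)
  moreover have "in_unit_ball b" using unit by (simp add: b_def)
  ultimately show ?thesis by blast
qed

theorem mainTheorem2:
  assumes "countably_degree2_saturated TYPE('a::cstar_algebra)"
  shows "countably_qf_saturated TYPE('a)"
  unfolding countably_qf_saturated_def
proof (rule countably_saturatedI)
  fix P :: "nat \<Rightarrow> 'a spoly" and K :: "nat \<Rightarrow> real set"
  assume compact: "\<forall>n. compact (K n)"
    and approx: "\<forall>m\<ge>1. \<exists>b. in_unit_ball b \<and> (\<forall>n\<le>m. norm (spoly_eval b (P n)) \<in> thicken (K n) (1 / real m))"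
  have sat: "countably_saturated {P. spoly_degree P \<le> 2} TYPE('a)"
    using assms unfolding countably_degree2_saturated_def .
  have "\<exists>b' :: nat \<Rightarrow> 'a. in_unit_ball b' \<and>
      (\<forall>k. norm (spoly_eval b' (linearized P k)) \<in> linearized_bounds K k)"
  proof (rule countably_saturatedD[OF sat])
    show "\<forall>k. linearized P k \<in> {P. spoly_degree P \<le> 2}"
      using degree_linearized by blast
    show "\<forall>k. compact (linearized_bounds K k)"
      using compact by (simp add: linearized_bounds_def)
    show "\<forall>m\<ge>1. \<exists>b'. in_unit_ball b' \<and>
        (\<forall>k\<le>m. norm (spoly_eval b' (linearized P k)) \<in> thicken (linearized_bounds K k) (1 / real m))"
      using approx by (rule linearized_approx_solutions)
  qed
  then show "\<exists>b. in_unit_ball b \<and> (\<forall>n. norm (spoly_eval b (P n)) \<in> K n)"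
    by (rule linearized_exact_solution)
qed

end
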